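(* Let $r,n\ge 1$ be integers and let $\Gamma=W(\mathcal K_r)\cong(\mathbb Z/2\mathbb Z)^r$, where $\mathcal K_r$ is the complete graph on $r$ vertices. Then \[ h_n(\Gamma)\le 4^{rn}\cdot n^r\cdot n^{(1-2^{-r})n}. \]
   Context: $W(\mathcal G)$ denotes the right-angled Coxeter group of a graph $\mathcal G$: generators $\sigma_v$ for the vertices, relations $\sigma_v^2=1$, and $\sigma_v\sigma_w=\sigma_w\sigma_v$ for adjacent $v,w$. For a group $\Gamma$, $h_n(\Gamma)=|\mathrm{Hom}(\Gamma,\mathrm{Sym}_n)|$ is the number of homomorphisms from $\Gamma$ to the symmetric group on $\{1,\dots,n\}$. *)

theory Defs
  imports "HOL-Combinatorics.Permutations" Complex_Main
begin

text \<open>Right-angled Coxeter group W(G) of a graph G on vertex set {0..<r} with symmetric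
  irreflexive adjacency E. By the universal property of the presentation, homomorphisms
  W(G) -> Sym_n correspond bijectively to assignments of the generators sigma_v (v < r) to
  permutations of {1..n} satisfying the defining relations. We count those assignments
  (functions are fixed to id outside {0..<r} so that the set is finite and the
  correspondence is bijective).\<close>

definition racg_hom_count :: "nat \<Rightarrow> (nat \<Rightarrow> nat \<Rightarrow> bool) \<Rightarrow> nat \<Rightarrow> nat" where
  "racg_hom_count r E n = card {s :: nat \<Rightarrow> nat \<Rightarrow> nat.
      (\<forall>v<r. s v permutes {1..n}) \<and>
      (\<forall>v<r. s v \<circ> s v = id) \<and>
      (\<forall>v<r. \<forall>w<r. E v w \<longrightarrow> s v \<circ> s w = s w \<circ> s v) \<and>
      (\<forall>v\<ge>r. s v = id)}"

definition complete_graph_adj :: "nat \<Rightarrow> nat \<Rightarrow> bool" where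
  "complete_graph_adj v w \<longleftrightarrow> v \<noteq> w"

end

theory Submission
  imports Defs
begin

text \<open>
  Homomorphisms are tuples (s_0, ..., s_(r-1)) of pairwise commuting involutions of S = {1..n}.
  Weight such a j-tuple by n^k, where k is the number of orbits of the group it generates. An
  involution t that can be appended to the tuple commutes with its entries, so it permutes their
  orbits and is determined by its values at the orbit minima. The minimum b of an orbit can only
  remain a minimum if t does not send its orbit to one with a smaller minimum; counting the
  possible values of t at b accordingly, each orbit O contributes a factor n (2 + |O|) \<le> n 4^|O|,
  so appending t multiplies the total weight by at most 4^n. Hence the r-tuples have total weight
  at most 4^(rn) n^n, while each of them has weight at least n^(n / 2^r), because an orbit of r
  commuting involutions has at most 2^r points.
\<close>

definition commuting_involutions :: "'a set \<Rightarrow> nat \<Rightarrow> (nat \<Rightarrow> 'a \<Rightarrow> 'a) \<Rightarrow> bool" where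
  "commuting_involutions S j s \<longleftrightarrow>
     (\<forall>v<j. s v permutes S) \<and> (\<forall>v<j. s v \<circ> s v = id) \<and>
     (\<forall>v<j. \<forall>w<j. s v \<circ> s w = s w \<circ> s v)"

lemma commuting_involutionsD:
  assumes "commuting_involutions S j s" and "v < j"
  shows "s v permutes S" and "s v (s v x) = x" and "w < j \<Longrightarrow> s v (s w x) = s w (s v x)"
  using assms unfolding commuting_involutions_def
  by (blast, blast intro: pointfree_idE, blast intro: comp_eq_dest)

lemma commuting_involutions_SucD: "commuting_involutions S (Suc j) s \<Longrightarrow> commuting_involutions S j s"
  unfolding commuting_involutions_def by simp

inductive_set group_orbit :: "(nat \<Rightarrow> 'a \<Rightarrow> 'a) \<Rightarrow> nat \<Rightarrow> 'a \<Rightarrow> 'a set"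
  for s j x where
  refl [intro]: "x \<in> group_orbit s j x"
| step: "y \<in> group_orbit s j x \<Longrightarrow> v < j \<Longrightarrow> s v y \<in> group_orbit s j x"

lemma group_orbit_0 [simp]: "group_orbit s 0 x = {x}"
proof -
  have "y = x" if "y \<in> group_orbit s 0 x" for y
    using that by induction auto
  then show ?thesis by blast
qed

lemma group_orbit_trans: "z \<in> group_orbit s j y \<Longrightarrow> y \<in> group_orbit s j x \<Longrightarrow> z \<in> group_orbit s j x"
  by (induction rule: group_orbit.induct) (simp_all add: group_orbit.step)

lemma group_orbit_mono: "j \<le> k \<Longrightarrow> group_orbit s j x \<subseteq> group_orbit s k x"
proof
  fix y assume "y \<in> group_orbit s j x" and "j \<le> k"
  then show "y \<in> group_orbit s k x"
    by (induction rule: group_orbit.induct) (simp_all add: group_orbit.refl group_orbit.step)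
qed

lemma group_orbit_fun_upd [simp]: "group_orbit (s(j := t)) j = group_orbit s j"
proof -
  have transfer: "y \<in> group_orbit s' j x" if "y \<in> group_orbit s j x" "\<forall>v<j. s v = s' v"
    for s s' :: "nat \<Rightarrow> 'a \<Rightarrow> 'a" and x y
    using that by induction (simp_all add: group_orbit.refl group_orbit.step)
  show ?thesis by (intro ext set_eqI iffI) (erule transfer, simp)+
qed

lemma group_orbit_sym:
  assumes "commuting_involutions S j s" and "y \<in> group_orbit s j x"
  shows "x \<in> group_orbit s j y"
  using assms(2)
proof induction
  case (step y v)
  have "s v (s v y) \<in> group_orbit s j (s v y)"
    using group_orbit.refl \<open>v < j\<close> by (rule group_orbit.step)
  then have "y \<in> group_orbit s j (s v y)"
    using commuting_involutionsD(2)[OF assms(1) \<open>v < j\<close>] by simp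
  with step.IH show ?case by (rule group_orbit_trans)
qed (rule group_orbit.refl)

lemma group_orbit_eq:
  assumes "commuting_involutions S j s" and "y \<in> group_orbit s j x"
  shows "group_orbit s j y = group_orbit s j x"
proof (intro equalityI subsetI)
  fix z assume "z \<in> group_orbit s j y"
  then show "z \<in> group_orbit s j x" using assms(2) by (rule group_orbit_trans)
next
  fix z assume "z \<in> group_orbit s j x"
  then show "z \<in> group_orbit s j y" using group_orbit_sym[OF assms] by (rule group_orbit_trans)
qed

lemma group_orbit_subset:
  assumes "commuting_involutions S j s" and "x \<in> S"
  shows "group_orbit s j x \<subseteq> S"
proof
  fix y assume "y \<in> group_orbit s j x"
  then show "y \<in> S"
    by induction (simp_all add: assms(2) permutes_in_image[OF commuting_involutionsD(1)[OF assms(1)]])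
qed

lemma group_orbit_Suc_subset:
  assumes "commuting_involutions S (Suc j) s"
  shows "group_orbit s (Suc j) x \<subseteq> group_orbit s j x \<union> s j ` group_orbit s j x"
proof
  fix y assume "y \<in> group_orbit s (Suc j) x"
  then show "y \<in> group_orbit s j x \<union> s j ` group_orbit s j x"
  proof induction
    case (step y v)
    have inv: "s j (s j z) = z" for z
      using commuting_involutionsD(2)[OF assms] by simp
    have comm: "v < j \<Longrightarrow> s v (s j z) = s j (s v z)" for z
      using commuting_involutionsD(3)[OF assms, of v j z] by simp
    from step.IH consider (old) "y \<in> group_orbit s j x"
      | (new) z where "z \<in> group_orbit s j x" and "y = s j z"
      by blast
    then show ?case
    proof cases
      case old
      then show ?thesis using step.hyps(2) by (cases "v = j") (simp_all add: group_orbit.step)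
    next
      case new
      then show ?thesis using step.hyps(2) inv comm by (cases "v = j") (simp_all add: group_orbit.step)
    qed
  qed blast
qed

lemma finite_group_orbit: "commuting_involutions S j s \<Longrightarrow> finite (group_orbit s j x)"
proof (induction j)
  case (Suc j)
  then have "finite (group_orbit s j x)" using commuting_involutions_SucD by blast
  then have "finite (group_orbit s j x \<union> s j ` group_orbit s j x)" by simp
  then show ?case using group_orbit_Suc_subset[OF Suc.prems] by (rule finite_subset[rotated])
qed simp

lemma card_group_orbit_le: "commuting_involutions S j s \<Longrightarrow> card (group_orbit s j x) \<le> 2 ^ j"
proof (induction j)
  case (Suc j)
  let ?O = "group_orbit s j x"
  have "commuting_involutions S j s" using Suc.prems by (rule commuting_involutions_SucD)
  then have fin: "finite ?O" by (rule finite_group_orbit)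
  have "card (group_orbit s (Suc j) x) \<le> card (?O \<union> s j ` ?O)"
    using group_orbit_Suc_subset[OF Suc.prems] fin by (intro card_mono) auto
  also have "\<dots> \<le> card ?O + card (s j ` ?O)" by (rule card_Un_le)
  also have "\<dots> \<le> 2 * card ?O" using card_image_le[OF fin, of "s j"] by simp
  also have "\<dots> \<le> 2 ^ Suc j" using Suc.IH[OF \<open>commuting_involutions S j s\<close>] by simp
  finally show ?case .
qed simp

definition orbit_mins :: "'a::linorder set \<Rightarrow> (nat \<Rightarrow> 'a \<Rightarrow> 'a) \<Rightarrow> nat \<Rightarrow> 'a set" where
  "orbit_mins S s j = {b \<in> S. \<forall>y \<in> group_orbit s j b. b \<le> y}"

lemma orbit_mins_0 [simp]: "orbit_mins S s 0 = S"
  unfolding orbit_mins_def by simp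

lemma finite_orbit_mins: "finite S \<Longrightarrow> finite (orbit_mins S s j)"
  unfolding orbit_mins_def by simp

lemma orbit_min_exists:
  assumes "commuting_involutions S j s" and "x \<in> S"
  obtains b where "b \<in> orbit_mins S s j" and "x \<in> group_orbit s j b"
proof
  let ?O = "group_orbit s j x"
  have fin: "finite ?O" using assms(1) by (rule finite_group_orbit)
  have min_in: "Min ?O \<in> ?O" using fin group_orbit.refl by (intro Min_in) blast+
  show "Min ?O \<in> orbit_mins S s j"
  proof -
    from min_in have "group_orbit s j (Min ?O) = ?O" using assms(1) by (intro group_orbit_eq)
    then show ?thesis
      using min_in group_orbit_subset[OF assms] fin unfolding orbit_mins_def by auto
  qed
  show "x \<in> group_orbit s j (Min ?O)"
    using assms(1) min_in by (rule group_orbit_sym)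
qed

lemma orbit_mins_eq:
  assumes "commuting_involutions S j s" and "b \<in> orbit_mins S s j" and "b' \<in> orbit_mins S s j"
    and "b' \<in> group_orbit s j b"
  shows "b' = b"
  using assms group_orbit_sym[OF assms(1,4)] unfolding orbit_mins_def by (simp add: order_antisym)

lemma sum_card_group_orbit_le:
  assumes "commuting_involutions S j s" and "finite S"
  shows "(\<Sum>b\<in>orbit_mins S s j. card (group_orbit s j b)) \<le> card S"
proof -
  let ?M = "orbit_mins S s j"
  have sub: "group_orbit s j b \<subseteq> S" if "b \<in> ?M" for b
    using that group_orbit_subset[OF assms(1)] unfolding orbit_mins_def by blast
  have "(\<Sum>b\<in>?M. card (group_orbit s j b)) = card (\<Union>b\<in>?M. group_orbit s j b)"
  proof (rule card_UN_disjoint[symmetric])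
    show "\<forall>b\<in>?M. \<forall>b'\<in>?M. b \<noteq> b' \<longrightarrow> group_orbit s j b \<inter> group_orbit s j b' = {}"
      using group_orbit_eq[OF assms(1)] orbit_mins_eq[OF assms(1)] group_orbit.refl by blast
  qed (use assms finite_orbit_mins finite_group_orbit in auto)
  also have "\<dots> \<le> card S" using sub by (intro card_mono assms(2)) blast
  finally show ?thesis .
qed

lemma card_le_orbit_mins:
  assumes "commuting_involutions S j s" and "finite S"
  shows "card S \<le> card (orbit_mins S s j) * 2 ^ j"
proof -
  let ?M = "orbit_mins S s j"
  have "S \<subseteq> (\<Union>b\<in>?M. group_orbit s j b)" using orbit_min_exists[OF assms(1)] by blast
  then have "card S \<le> card (\<Union>b\<in>?M. group_orbit s j b)"
    using finite_orbit_mins[OF assms(2)] finite_group_orbit[OF assms(1)] by (intro card_mono) auto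
  also have "\<dots> \<le> (\<Sum>b\<in>?M. card (group_orbit s j b))" by (rule card_UN_le[OF finite_orbit_mins[OF assms(2)]])
  also have "\<dots> \<le> (\<Sum>b\<in>?M. 2 ^ j)" using card_group_orbit_le[OF assms(1)] by (intro sum_mono)
  also have "\<dots> = card ?M * 2 ^ j" by simp
  finally show ?thesis .
qed

definition commuting_extensions :: "'a set \<Rightarrow> nat \<Rightarrow> (nat \<Rightarrow> 'a \<Rightarrow> 'a) \<Rightarrow> ('a \<Rightarrow> 'a) set" where
  "commuting_extensions S j s = {t. t permutes S \<and> t \<circ> t = id \<and> (\<forall>v<j. t \<circ> s v = s v \<circ> t)}"

lemma commuting_involutions_Suc_fun_upd_iff:
  "commuting_involutions S (Suc j) (s(j := t)) \<longleftrightarrow>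
     commuting_involutions S j s \<and> t \<in> commuting_extensions S j s"
  unfolding commuting_involutions_def commuting_extensions_def
  by (auto simp: less_Suc_eq)

lemma commuting_extensionD:
  assumes "t \<in> commuting_extensions S j s"
  shows "t permutes S" and "t (t x) = x" and "v < j \<Longrightarrow> t (s v x) = s v (t x)"
  using assms unfolding commuting_extensions_def
  by (blast, blast intro: pointfree_idE, blast intro: comp_eq_dest)

lemma finite_commuting_extensions: "finite S \<Longrightarrow> finite (commuting_extensions S j s)"
  unfolding commuting_extensions_def by (rule finite_subset[OF _ finite_permutations]) auto

lemma group_orbit_commuting_extension:
  assumes "t \<in> commuting_extensions S j s" and "y \<in> group_orbit s j x"
  shows "t y \<in> group_orbit s j (t x)"
  using assms(2)
proof induction
  case (step y v)
  then show ?case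
    using commuting_extensionD(3)[OF assms(1) step.hyps(2)] group_orbit.step[OF step.IH step.hyps(2)]
    by simp
qed (rule group_orbit.refl)

lemma commuting_extensions_agree_on_group_orbit:
  assumes "t \<in> commuting_extensions S j s" and "t' \<in> commuting_extensions S j s"
    and "t x = t' x" and "y \<in> group_orbit s j x"
  shows "t y = t' y"
  using assms(4)
proof induction
  case (step y v)
  then show ?case
    using commuting_extensionD(3)[OF assms(1) step.hyps(2)] commuting_extensionD(3)[OF assms(2) step.hyps(2)]
    by simp
qed (rule assms(3))

definition moves_down :: "(nat \<Rightarrow> 'a::linorder \<Rightarrow> 'a) \<Rightarrow> nat \<Rightarrow> ('a \<Rightarrow> 'a) \<Rightarrow> 'a \<Rightarrow> bool" where
  "moves_down s j t b \<longleftrightarrow> (\<exists>y \<in> group_orbit s j (t b). y < b)"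

text \<open>
  The value of t at an orbit minimum b is left out exactly when t maps the orbit of b onto a
  different orbit with a larger minimum b'; it is then recovered from the value recorded at b'
  (lemma orbit_code_partner).
\<close>

definition orbit_code :: "'a::linorder set \<Rightarrow> (nat \<Rightarrow> 'a \<Rightarrow> 'a) \<Rightarrow> nat \<Rightarrow> ('a \<Rightarrow> 'a) \<Rightarrow> 'a \<Rightarrow> 'a option" where
  "orbit_code S s j t = (\<lambda>b \<in> orbit_mins S s j.
     if t b \<notin> group_orbit s j b \<and> \<not> moves_down s j t b then None else Some (t b))"

lemma moves_down_not_in_group_orbit:
  assumes "commuting_involutions S j s" and "b \<in> orbit_mins S s j" and "moves_down s j t b"
  shows "t b \<notin> group_orbit s j b"
proof
  assume "t b \<in> group_orbit s j b"
  with assms(1) have "group_orbit s j (t b) = group_orbit s j b" by (rule group_orbit_eq)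
  then show False using assms(2,3) unfolding moves_down_def orbit_mins_def by (auto simp: not_less)
qed

lemma orbit_code_partner:
  assumes "commuting_involutions S j s" and "t \<in> commuting_extensions S j s"
    and "b \<in> orbit_mins S s j" and "t b \<notin> group_orbit s j b" and "\<not> moves_down s j t b"
  obtains b' where "b' \<in> orbit_mins S s j" and "t b \<in> group_orbit s j b'"
    and "orbit_code S s j t b' = Some (t b')"
proof -
  have "t b \<in> S"
    using assms(3) commuting_extensionD(1)[OF assms(2)] unfolding orbit_mins_def
    by (simp add: permutes_in_image)
  then obtain b' where b': "b' \<in> orbit_mins S s j" "t b \<in> group_orbit s j b'"
    using orbit_min_exists[OF assms(1)] by blast
  have b'_orbit: "b' \<in> group_orbit s j (t b)" using group_orbit_sym[OF assms(1) b'(2)] .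
  have "t b' \<in> group_orbit s j b"
    using group_orbit_commuting_extension[OF assms(2) b'_orbit] commuting_extensionD(2)[OF assms(2)]
    by simp
  with assms(1) have b_orbit: "b \<in> group_orbit s j (t b')" by (rule group_orbit_sym)
  have "b \<le> b'" using assms(5) b'_orbit unfolding moves_down_def by (simp add: not_less)
  moreover have "b \<noteq> b'" using assms(4) b'(2) by blast
  ultimately have "b < b'" by simp
  with b_orbit have "moves_down s j t b'" unfolding moves_down_def by blast
  then have "orbit_code S s j t b' = Some (t b')" using b'(1) unfolding orbit_code_def by simp
  with b' show ?thesis by (rule that)
qed

lemma inj_on_orbit_code:
  assumes "commuting_involutions S j s"
  shows "inj_on (orbit_code S s j) (commuting_extensions S j s)"
proof (rule inj_onI)
  fix t t' assume t: "t \<in> commuting_extensions S j s" and t': "t' \<in> commuting_extensions S j s"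
    and code: "orbit_code S s j t = orbit_code S s j t'"
  have Some_code: "t' b = y" if "b \<in> orbit_mins S s j" and "orbit_code S s j t b = Some y" for b y
    using that code unfolding orbit_code_def by (auto split: if_splits)
  have on_mins: "t b = t' b" if b: "b \<in> orbit_mins S s j" for b
  proof (cases "t b \<notin> group_orbit s j b \<and> \<not> moves_down s j t b")
    case True
    then obtain b' where b': "b' \<in> orbit_mins S s j" "t b \<in> group_orbit s j b'"
      "orbit_code S s j t b' = Some (t b')"
      using orbit_code_partner[OF assms t b] by blast
    have "t b' = t' b'" using Some_code[OF b'(1,3)] by simp
    then have "t (t b) = t' (t b)" using commuting_extensions_agree_on_group_orbit[OF t t' _ b'(2)] by simp
    then have "t' (t' b) = t' (t b)" using commuting_extensionD(2)[OF t] commuting_extensionD(2)[OF t'] by simp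
    then show ?thesis using commuting_extensionD(1)[OF t'] by (simp add: permutes_inj[THEN injD])
  next
    case False
    then have "orbit_code S s j t b = Some (t b)" using b unfolding orbit_code_def by auto
    then show ?thesis using Some_code[OF b] by simp
  qed
  show "t = t'"
  proof
    fix x
    show "t x = t' x"
    proof (cases "x \<in> S")
      case True
      then obtain b where "b \<in> orbit_mins S s j" and "x \<in> group_orbit s j b"
        using orbit_min_exists[OF assms] by blast
      then show ?thesis using commuting_extensions_agree_on_group_orbit[OF t t'] on_mins by blast
    next
      case False
      then show ?thesis
        using commuting_extensionD(1)[OF t] commuting_extensionD(1)[OF t'] by (simp add: permutes_not_in)
    qed
  qed
qed

lemma orbit_mins_fun_upd_subset:
  "orbit_mins S (s(j := t)) (Suc j) \<subseteq> {b \<in> orbit_mins S s j. \<not> moves_down s j t b}"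
proof (intro subsetI CollectI conjI)
  fix b assume b: "b \<in> orbit_mins S (s(j := t)) (Suc j)"
  let ?O' = "group_orbit (s(j := t)) (Suc j) b"
  have "group_orbit s j b \<subseteq> ?O'"
    using group_orbit_mono[of j "Suc j" "s(j := t)" b] by simp
  then show "b \<in> orbit_mins S s j" using b unfolding orbit_mins_def by blast
  have "(s(j := t)) j b \<in> ?O'" by (rule group_orbit.step[OF group_orbit.refl]) simp
  then have tb: "t b \<in> ?O'" by simp
  have sub: "group_orbit s j (t b) \<subseteq> ?O'"
  proof
    fix y assume "y \<in> group_orbit s j (t b)"
    then have "y \<in> group_orbit (s(j := t)) (Suc j) (t b)"
      using group_orbit_mono[of j "Suc j" "s(j := t)" "t b"] by auto
    then show "y \<in> ?O'" using tb by (rule group_orbit_trans)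
  qed
  have "\<forall>y\<in>?O'. b \<le> y" using b unfolding orbit_mins_def by blast
  with sub show "\<not> moves_down s j t b" by (simp add: moves_down_def not_less) blast
qed

definition code_weight :: "nat \<Rightarrow> 'a set \<Rightarrow> 'a option \<Rightarrow> nat" where
  "code_weight n A z = (case z of None \<Rightarrow> n | Some y \<Rightarrow> if y \<in> A then n else 1)"

lemma code_weight_orbit_code:
  assumes "commuting_involutions S j s" and "b \<in> orbit_mins S s j"
  shows "code_weight n (group_orbit s j b) (orbit_code S s j t b) = (if moves_down s j t b then 1 else n)"
  using assms(2) moves_down_not_in_group_orbit[OF assms]
  by (cases "moves_down s j t b") (simp_all add: code_weight_def orbit_code_def)

lemma power_card_orbit_mins_fun_upd_le:
  assumes "commuting_involutions S j s" and "finite S" and "n \<ge> 1"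
  shows "n ^ card (orbit_mins S (s(j := t)) (Suc j))
           \<le> (\<Prod>b\<in>orbit_mins S s j. code_weight n (group_orbit s j b) (orbit_code S s j t b))"
proof -
  let ?M = "orbit_mins S s j"
  have "card (orbit_mins S (s(j := t)) (Suc j)) \<le> card {b \<in> ?M. \<not> moves_down s j t b}"
    by (rule card_mono) (use finite_orbit_mins[OF assms(2)] orbit_mins_fun_upd_subset[of S s j t] in auto)
  then have "n ^ card (orbit_mins S (s(j := t)) (Suc j)) \<le> n ^ card {b \<in> ?M. \<not> moves_down s j t b}"
    using assms(3) by (rule power_increasing)
  also have "\<dots> = (\<Prod>b\<in>?M. if moves_down s j t b then 1 else n)"
    using finite_orbit_mins[OF assms(2)] by (simp add: prod.If_cases Int_def)
  also have "\<dots> = (\<Prod>b\<in>?M. code_weight n (group_orbit s j b) (orbit_code S s j t b))"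
    using code_weight_orbit_code[OF assms(1)] by simp
  finally show ?thesis .
qed

lemma two_plus_le_four_power: "k \<ge> 1 \<Longrightarrow> 2 + k \<le> (4::nat) ^ k"
  by (induction k rule: dec_induct) simp_all

lemma sum_code_weight_le:
  assumes "finite S" and "A \<subseteq> S" and "A \<noteq> {}"
  shows "(\<Sum>z\<in>insert None (Some ` S). code_weight (card S) A z) \<le> card S * 4 ^ card A"
proof -
  let ?n = "card S"
  have "(\<Sum>z\<in>insert None (Some ` S). code_weight ?n A z) = ?n + (\<Sum>y\<in>S. code_weight ?n A (Some y))"
    using assms(1) by (simp add: sum.reindex code_weight_def)
  also have "(\<Sum>y\<in>S. code_weight ?n A (Some y)) \<le> (\<Sum>y\<in>S. (if y \<in> A then ?n else 0) + 1)"
    by (rule sum_mono) (simp add: code_weight_def)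
  also have "\<dots> = (\<Sum>y\<in>S. if y \<in> A then ?n else 0) + ?n" unfolding sum.distrib by simp
  also have "(\<Sum>y\<in>S. if y \<in> A then ?n else 0) = ?n * card A"
  proof -
    have "{y \<in> S. y \<in> A} = A" using assms(2) by blast
    then show ?thesis
      using sum.inter_filter[OF assms(1), of "\<lambda>_. ?n" "\<lambda>y. y \<in> A"] by (simp add: mult.commute)
  qed
  finally have "(\<Sum>z\<in>insert None (Some ` S). code_weight ?n A z) \<le> ?n * (2 + card A)"
    by (simp add: algebra_simps)
  also have "\<dots> \<le> ?n * 4 ^ card A"
  proof -
    have "finite A" using assms(1,2) by (rule finite_subset[rotated])
    then have "card A \<ge> 1" using assms(3) by (simp add: Suc_le_eq card_gt_0_iff)
    then show ?thesis by (rule mult_le_mono2[OF two_plus_le_four_power])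
  qed
  finally show ?thesis .
qed

lemma orbit_code_in_PiE:
  assumes "t \<in> commuting_extensions S j s"
  shows "orbit_code S s j t \<in> PiE (orbit_mins S s j) (\<lambda>_. insert None (Some ` S))"
proof -
  have "t b \<in> S" if "b \<in> orbit_mins S s j" for b
    using that commuting_extensionD(1)[OF assms] unfolding orbit_mins_def
    by (simp add: permutes_in_image)
  then show ?thesis unfolding orbit_code_def restrict_PiE_iff by simp
qed

lemma sum_commuting_extensions_le:
  assumes "commuting_involutions S j s" and "finite S" and "S \<noteq> {}"
  shows "(\<Sum>t\<in>commuting_extensions S j s. card S ^ card (orbit_mins S (s(j := t)) (Suc j)))
           \<le> 4 ^ card S * card S ^ card (orbit_mins S s j)"
proof -
  let ?n = "card S" and ?M = "orbit_mins S s j" and ?T = "commuting_extensions S j s"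
  let ?Z = "\<lambda>_. insert None (Some ` S)" and ?O = "group_orbit s j"
  define W where "W c = (\<Prod>b\<in>?M. code_weight ?n (?O b) (c b))" for c
  have n: "?n \<ge> 1" using assms(2,3) by (simp add: Suc_leI card_gt_0_iff)
  have finite_codes: "finite (PiE ?M ?Z)"
    using finite_orbit_mins[OF assms(2)] assms(2) by (intro finite_PiE) simp_all
  have "(\<Sum>t\<in>?T. ?n ^ card (orbit_mins S (s(j := t)) (Suc j))) \<le> (\<Sum>t\<in>?T. W (orbit_code S s j t))"
    unfolding W_def using power_card_orbit_mins_fun_upd_le[OF assms(1,2) n] by (rule sum_mono)
  also have "\<dots> = (\<Sum>c\<in>orbit_code S s j ` ?T. W c)"
    by (simp add: sum.reindex[OF inj_on_orbit_code[OF assms(1)]])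
  also have "\<dots> \<le> (\<Sum>c\<in>PiE ?M ?Z. W c)"
    by (rule sum_mono2[OF finite_codes image_subsetI[OF orbit_code_in_PiE]]) simp_all
  also have "\<dots> = (\<Prod>b\<in>?M. \<Sum>z\<in>?Z b. code_weight ?n (?O b) z)"
    unfolding W_def using finite_orbit_mins[OF assms(2)] assms(2) by (intro prod_sum_PiE[symmetric]) simp_all
  also have "\<dots> \<le> (\<Prod>b\<in>?M. ?n * 4 ^ card (?O b))"
  proof (rule prod_mono)
    fix b assume "b \<in> ?M"
    then have "?O b \<subseteq> S" using group_orbit_subset[OF assms(1)] unfolding orbit_mins_def by blast
    moreover have "?O b \<noteq> {}" using group_orbit.refl by blast
    ultimately show "0 \<le> (\<Sum>z\<in>?Z b. code_weight ?n (?O b) z) \<and>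
        (\<Sum>z\<in>?Z b. code_weight ?n (?O b) z) \<le> ?n * 4 ^ card (?O b)"
      using sum_code_weight_le[OF assms(2)] by simp
  qed
  also have "\<dots> = ?n ^ card ?M * 4 ^ (\<Sum>b\<in>?M. card (?O b))"
    by (simp add: prod.distrib power_sum)
  also have "\<dots> \<le> ?n ^ card ?M * 4 ^ ?n"
    using sum_card_group_orbit_le[OF assms(1,2)] by (intro mult_le_mono2 power_increasing) simp_all
  finally show ?thesis by (simp add: mult.commute)
qed

definition commuting_tuples :: "'a set \<Rightarrow> nat \<Rightarrow> (nat \<Rightarrow> 'a \<Rightarrow> 'a) set" where
  "commuting_tuples S j = {s. commuting_involutions S j s \<and> (\<forall>v\<ge>j. s v = id)}"

lemma commuting_tuples_0: "commuting_tuples S 0 = {\<lambda>_. id}"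
  unfolding commuting_tuples_def commuting_involutions_def by auto

lemma bij_betw_commuting_tuples_Suc:
  "bij_betw (\<lambda>(s, t). s(j := t))
     (Sigma (commuting_tuples S j) (commuting_extensions S j)) (commuting_tuples S (Suc j))"
  (is "bij_betw _ ?A ?B")
proof (rule bij_betwI[where g = "\<lambda>s. (s(j := id), s j)"])
  show "(\<lambda>(s, t). s(j := t)) \<in> ?A \<rightarrow> ?B"
    unfolding commuting_tuples_def by (auto simp: commuting_involutions_Suc_fun_upd_iff)
  show "(\<lambda>s. (s(j := id), s j)) \<in> ?B \<rightarrow> ?A"
  proof
    fix s assume s: "s \<in> ?B"
    then have "commuting_involutions S (Suc j) ((s(j := id))(j := s j))"
      unfolding commuting_tuples_def by simp
    then show "(s(j := id), s j) \<in> ?A"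
      using s unfolding commuting_involutions_Suc_fun_upd_iff commuting_tuples_def by simp
  qed
  show "(\<lambda>s. (s(j := id), s j)) ((\<lambda>(s, t). s(j := t)) p) = p" if "p \<in> ?A" for p
    using that unfolding commuting_tuples_def by auto
qed simp

lemma finite_commuting_tuples: "finite S \<Longrightarrow> finite (commuting_tuples S j)"
proof (induction j)
  case 0
  then show ?case by (simp add: commuting_tuples_0)
next
  case (Suc j)
  then have "finite (Sigma (commuting_tuples S j) (commuting_extensions S j))"
    by (intro finite_SigmaI finite_commuting_extensions)
  then show ?case using bij_betw_commuting_tuples_Suc bij_betw_finite by blast
qed

lemma sum_commuting_tuples_le:
  assumes "finite S" and "S \<noteq> {}"
  shows "(\<Sum>s\<in>commuting_tuples S j. card S ^ card (orbit_mins S s j)) \<le> 4 ^ (j * card S) * card S ^ card S"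
proof (induction j)
  case 0
  then show ?case by (simp add: commuting_tuples_0)
next
  case (Suc j)
  let ?n = "card S" and ?T = "commuting_tuples S j"
  have "(\<Sum>s\<in>commuting_tuples S (Suc j). ?n ^ card (orbit_mins S s (Suc j)))
      = (\<Sum>(s, t)\<in>Sigma ?T (commuting_extensions S j). ?n ^ card (orbit_mins S (s(j := t)) (Suc j)))"
    using sum.reindex_bij_betw[OF bij_betw_commuting_tuples_Suc, symmetric]
    by (simp add: case_prod_beta)
  also have "\<dots> = (\<Sum>s\<in>?T. \<Sum>t\<in>commuting_extensions S j s. ?n ^ card (orbit_mins S (s(j := t)) (Suc j)))"
    using finite_commuting_tuples[OF assms(1)] finite_commuting_extensions[OF assms(1)]
    by (simp add: sum.Sigma)
  also have "\<dots> \<le> (\<Sum>s\<in>?T. 4 ^ ?n * ?n ^ card (orbit_mins S s j))"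
    using sum_commuting_extensions_le[OF _ assms] unfolding commuting_tuples_def by (intro sum_mono) simp
  also have "\<dots> = 4 ^ ?n * (\<Sum>s\<in>?T. ?n ^ card (orbit_mins S s j))"
    by (rule sum_distrib_left[symmetric])
  also have "\<dots> \<le> 4 ^ ?n * (4 ^ (j * ?n) * ?n ^ ?n)"
    using Suc.IH by simp
  also have "\<dots> = 4 ^ (Suc j * ?n) * ?n ^ ?n"
    by (simp add: power_add)
  finally show ?case .
qed

lemma card_commuting_tuples_le:
  fixes S :: "'a::linorder set"
  assumes "finite S" and "S \<noteq> {}"
  shows "real (card (commuting_tuples S j))
           \<le> 4 ^ (j * card S) * real (card S) powr ((1 - 2 powr - real j) * card S)"
proof -
  let ?n = "card S" and ?T = "commuting_tuples S j"
  define c where "c = real ?n powr (?n / 2 ^ j)"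
  have n: "real ?n \<ge> 1" using assms by (simp add: Suc_le_eq card_gt_0_iff)
  then have c_pos: "c > 0" unfolding c_def by simp
  have c_le: "c \<le> real ?n ^ card (orbit_mins S s j)" if "s \<in> ?T" for s
  proof -
    have "?n \<le> card (orbit_mins S s j) * 2 ^ j"
      using that assms(1) card_le_orbit_mins unfolding commuting_tuples_def by blast
    then have "real ?n \<le> real (card (orbit_mins S s j) * 2 ^ j)"
      by (simp only: of_nat_le_iff)
    then have "?n / 2 ^ j \<le> real (card (orbit_mins S s j))"
      by (simp add: divide_le_eq)
    then have "c \<le> real ?n powr real (card (orbit_mins S s j))"
      unfolding c_def using n by (rule powr_mono)
    also have "\<dots> = real ?n ^ card (orbit_mins S s j)"
      using n by (simp add: powr_realpow)
    finally show ?thesis .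
  qed
  have "real (card ?T) * c = (\<Sum>s\<in>?T. c)" by simp
  also have "\<dots> \<le> (\<Sum>s\<in>?T. real ?n ^ card (orbit_mins S s j))" using c_le by (rule sum_mono)
  also have "\<dots> = real (\<Sum>s\<in>?T. ?n ^ card (orbit_mins S s j))" by simp
  also have "\<dots> \<le> real (4 ^ (j * ?n) * ?n ^ ?n)"
    using sum_commuting_tuples_le[OF assms, of j] by (simp only: of_nat_le_iff)
  also have "\<dots> = 4 ^ (j * ?n) * real ?n ^ ?n" by simp
  also have "real ?n ^ ?n = real ?n powr ((1 - 2 powr - real j) * ?n + ?n / 2 ^ j)"
  proof -
    have "2 powr - real j = 1 / 2 ^ j" by (simp add: powr_minus powr_realpow divide_inverse)
    then have "(1 - 2 powr - real j) * ?n + ?n / 2 ^ j = ?n" by (simp add: algebra_simps)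
    then show ?thesis using n by (simp add: powr_realpow)
  qed
  also have "\<dots> = real ?n powr ((1 - 2 powr - real j) * ?n) * c"
    unfolding c_def by (rule powr_add)
  finally have "real (card ?T) * c \<le> 4 ^ (j * ?n) * real ?n powr ((1 - 2 powr - real j) * ?n) * c"
    by (simp add: mult.assoc)
  then show ?thesis using c_pos by (simp only: mult_le_cancel_right_pos)
qed

lemma racg_hom_count_complete_graph:
  "racg_hom_count r complete_graph_adj n = card (commuting_tuples {1..n} r)"
proof -
  have "(v \<noteq> w \<longrightarrow> s v \<circ> s w = s w \<circ> s v) \<longleftrightarrow> s v \<circ> s w = s w \<circ> s v"
    for s :: "nat \<Rightarrow> nat \<Rightarrow> nat" and v w
    by auto
  then show ?thesis
    unfolding racg_hom_count_def commuting_tuples_def commuting_involutions_def complete_graph_adj_def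
    by (simp add: conj_assoc)
qed

theorem proposition3p3:
  fixes r n :: nat
  assumes "r \<ge> 1" and "n \<ge> 1"
  shows "real (racg_hom_count r complete_graph_adj n)
           \<le> 4 ^ (r * n) * real n ^ r * real n powr ((1 - 2 powr (- real r)) * real n)"
proof -
  have "real (racg_hom_count r complete_graph_adj n)
          \<le> 4 ^ (r * n) * real n powr ((1 - 2 powr (- real r)) * real n)"
    using card_commuting_tuples_le[of "{1..n}" r] assms(2)
    unfolding racg_hom_count_complete_graph by simp
  also have "\<dots> \<le> 4 ^ (r * n) * real n ^ r * real n powr ((1 - 2 powr (- real r)) * real n)"
    using assms(2) by (simp add: mult_right_mono)
  finally show ?thesis .
qed

end
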